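(* Let $k\ge 3$ be an integer such that every set of $k-1$ distinct positive integers has the LR property, and let $p$ be a positive integer. Let $N=\lfloor (k+1)p/2\rfloor$. Suppose there is no $k$-tuple $v_1,\ldots,v_k\in\{1,\ldots,N\}\setminus p\mathbb{N}$ such that (i) for every subset $S\subseteq\{v_1,\ldots,v_k\}$ of size $k-1$ we have $\gcd(S\cup\{(k+1)p\})=1$, and (ii) $\{v_1,\ldots,v_k\}$ covers $\{1,\ldots,N\}$. Then for every set $\{v_1,\ldots,v_k\}$ of $k$ distinct integers that does not have the LR property, $p$ divides $\prod_{i=1}^k v_i$.
   Context: For a real number $x$, $\|x\|$ denotes the distance from $x$ to the nearest integer. A finite set $S$ of $m$ integers has the LR (lonely runner) property if there exists a real $t$ such that $\|tv\|\ge \frac{1}{m+1}$ for all $v\in S$. Given $k$ and $p$, an integer $v$ covers an integer $j$ if $\left\|\frac{jv}{(k+1)p}\right\|<\frac{1}{k+1}$; a set $\{v_1,\ldots,v_i\}$ covers a set $T$ of integers if every element of $T$ is covered by at least one $v_l$. $p\mathbb{N}$ denotes the set of multiples of $p$. The hypothesis "every set of $k-1$ distinct positive integers has the LR property" is what the paper calls "the lonely runner conjecture holds for $k-1$". *)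

theory Defs
  imports Complex_Main
begin

definition dist_int :: "real \<Rightarrow> real" where
  "dist_int x = min (x - of_int \<lfloor>x\<rfloor>) (of_int \<lceil>x\<rceil> - x)"

definition LR :: "int set \<Rightarrow> bool" where
  "LR S \<longleftrightarrow> (\<exists>t::real. \<forall>v\<in>S. dist_int (t * of_int v) \<ge> 1 / (real (card S) + 1))"

definition covers :: "nat \<Rightarrow> nat \<Rightarrow> int \<Rightarrow> int \<Rightarrow> bool" where
  "covers k p v j \<longleftrightarrow>
     dist_int (of_int j * of_int v / (real (k + 1) * real p)) < 1 / (real k + 1)"

end

theory Submission
  imports Defs
begin

(* Suppose V is a set of k speeds without the LR property and p divides no element of V; after
   dividing by Gcd V we may assume Gcd V = 1. Replacing each v by its distance to the nearest
   multiple of (k+1)p gives k numbers in {1..N} not divisible by p. At the times j/((k+1)p) this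
   replacement changes no distance to the integers, so the failure of LR at these times yields the
   covering property (ii). For (i), let d = Gcd (V - {v}). If d did not divide v, the LR property for
   the k-1 quotients w/d would give a time t such that all times (t+m)/d, m an integer, are good for
   V - {v}, and one of these shifts puts v at distance at least 1/4 from the integers, so V would
   have the LR property. Hence Gcd (V - {v}) = Gcd V = 1, and coprimality with (k+1)p is preserved
   by the reduction. *)

definition lonely_runner_holds :: "nat \<Rightarrow> bool" where
  "lonely_runner_holds n \<longleftrightarrow> (\<forall>S :: int set. finite S \<and> card S = n \<and> (\<forall>v\<in>S. v > 0) \<longrightarrow> LR S)"

lemma dist_int_add_of_int [simp]: "dist_int (x + of_int n) = dist_int x"
  unfolding dist_int_def by simp

lemma dist_int_minus [simp]: "dist_int (- x) = dist_int x"
proof -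
  have "- x - of_int \<lfloor>- x\<rfloor> = of_int \<lceil>x\<rceil> - x" by (simp add: floor_minus)
  moreover have "of_int \<lceil>- x\<rceil> - (- x) = x - of_int \<lfloor>x\<rfloor>" by (simp add: ceiling_minus)
  ultimately show ?thesis unfolding dist_int_def by (simp add: min.commute)
qed

lemma dist_int_mult_abs [simp]: "dist_int (t * \<bar>x\<bar>) = dist_int (t * x)"
proof (cases "x \<ge> 0")
  case False
  then have "t * \<bar>x\<bar> = - (t * x)" by simp
  then show ?thesis by simp
qed simp

lemma dist_int_ge_quarter:
  assumes "1/4 \<le> x" "x \<le> 3/4"
  shows "dist_int x \<ge> 1/4"
proof -
  have "\<lfloor>x\<rfloor> = 0" "\<lceil>x\<rceil> = 1" using assms by (auto intro: floor_unique ceiling_unique)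
  then show ?thesis using assms unfolding dist_int_def by simp
qed

lemma ex_dist_int_add_divide_ge_quarter:
  fixes d :: real
  assumes "d \<ge> 2"
  shows "\<exists>r::int. dist_int (x + of_int r / d) \<ge> 1/4"
proof
  define r where "r = \<lceil>(1/4 - x) * d\<rceil>"
  have "(1/4 - x) * d \<le> of_int r" "of_int r < (1/4 - x) * d + 1"
    unfolding r_def by linarith+
  then have "1/4 - x \<le> of_int r / d" "of_int r / d < 1/4 - x + 1/d"
    using assms by (simp_all add: field_simps)
  moreover have "1/d \<le> 1/2" using assms by simp
  ultimately have "1/4 \<le> x + of_int r / d" "x + of_int r / d \<le> 3/4" by linarith+
  then show "dist_int (x + of_int r / d) \<ge> 1/4" by (rule dist_int_ge_quarter)
qed

lemma ex_shift_dist_int_ge_quarter: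
  fixes a d :: int
  assumes "d \<ge> 2" "\<not> d dvd a"
  shows "\<exists>m::int. dist_int ((t + of_int m) * of_int a / of_int d) \<ge> 1/4"
proof -
  define g where "g = gcd a d"
  define a' d' where "a' = a div g" and "d' = d div g"
  have "g > 0" using assms(1) unfolding g_def by simp
  have a: "a = g * a'" and d: "d = g * d'" unfolding g_def a'_def d'_def by simp_all
  have "d' > 0" using zero_less_mult_pos[of g d'] \<open>g > 0\<close> assms(1) d by simp
  moreover have "d' \<noteq> 1" using assms(2) a d by auto
  ultimately have "d' \<ge> 2" by simp
  have "coprime a' d'" unfolding a'_def d'_def g_def using assms(1) by (intro div_gcd_coprime) auto
  then obtain x y where xy: "x * a' + y * d' = 1" using bezout_int[of a' d'] by auto
  obtain r where r: "dist_int (t * of_int a' / of_int d' + of_int r / of_int d') \<ge> 1/4"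
    using ex_dist_int_add_divide_ge_quarter[of "of_int d'"] \<open>d' \<ge> 2\<close> by auto
  have xa: "real_of_int x * of_int a' = 1 - of_int y * of_int d'"
    using arg_cong[OF xy, of real_of_int] by simp
  have "(t + of_int (r * x)) * of_int a / of_int d = (t + of_int r * of_int x) * of_int a' / of_int d'"
    using \<open>g > 0\<close> unfolding a d by simp
  also have "\<dots> = t * of_int a' / of_int d' + of_int r * (of_int x * of_int a') / of_int d'"
    by (simp add: algebra_simps add_divide_distrib)
  also have "\<dots> = t * of_int a' / of_int d' + of_int r / of_int d' + of_int (- (r * y))"
    using \<open>d' > 0\<close> unfolding xa by (simp add: algebra_simps diff_divide_distrib)
  finally have "(t + of_int (r * x)) * of_int a / of_int d
      = t * of_int a' / of_int d' + of_int r / of_int d' + of_int (- (r * y))" .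
  then show ?thesis using r by (metis dist_int_add_of_int)
qed

lemma lonely_runner_holds_card_le:
  assumes "lonely_runner_holds (k - 1)" "k \<ge> 1" "finite A" "card A \<le> k - 1" "0 \<notin> A"
  shows "\<exists>t. \<forall>v\<in>A. dist_int (t * of_int v) \<ge> 1 / real k"
proof -
  define P where "P = abs ` A"
  define m where "m = Max (insert 0 P)"
  define B where "B = {m + 1 .. m + int (k - 1 - card P)}"
  have "finite P" "card P \<le> k - 1" "\<forall>v\<in>P. v > 0"
    using assms(3-5) card_image_le[of A abs] unfolding P_def by auto
  moreover have "\<forall>v\<in>P. v \<le> m" "m \<ge> 0" using \<open>finite P\<close> unfolding m_def by auto
  moreover have "P \<inter> B = {}" "card B = k - 1 - card P" using \<open>\<forall>v\<in>P. v \<le> m\<close> unfolding B_def by auto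
  ultimately have "finite (P \<union> B)" "card (P \<union> B) = k - 1" "\<forall>v\<in>P \<union> B. v > 0"
    unfolding B_def by (auto simp: card_Un_disjoint)
  then obtain t where t: "\<forall>v\<in>P \<union> B. dist_int (t * of_int v) \<ge> 1 / (real (k - 1) + 1)"
    using assms(1) unfolding lonely_runner_holds_def LR_def by metis
  have "\<forall>v\<in>A. dist_int (t * of_int v) \<ge> 1 / real k"
  proof
    fix v assume "v \<in> A"
    then have "\<bar>v\<bar> \<in> P \<union> B" unfolding P_def by simp
    then have "dist_int (t * of_int \<bar>v\<bar>) \<ge> 1 / (real (k - 1) + 1)" using t by blast
    then show "dist_int (t * of_int v) \<ge> 1 / real k" using assms(2) by (simp add: of_nat_diff)
  qed
  then show ?thesis ..
qed

lemma lonely_runner_holds_dvd: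
  assumes "lonely_runner_holds (k - 1)" "k \<ge> 1" "finite U" "card U \<le> k - 1" "0 \<notin> U"
    and dvd: "\<forall>w\<in>U. d dvd w"
  shows "\<exists>t. \<forall>w\<in>U. \<forall>m::int. dist_int ((t + of_int m) / of_int d * of_int w) \<ge> 1 / real k"
proof -
  define S where "S = (\<lambda>w. w div d) ` U"
  have w: "w = d * (w div d)" if "w \<in> U" for w
    using dvd that by simp
  then have "w div d \<noteq> 0" if "w \<in> U" for w
    using that assms(5) by (metis mult_zero_right)
  then have "0 \<notin> S" unfolding S_def by force
  moreover have "finite S" "card S \<le> k - 1"
    unfolding S_def using assms(3,4) card_image_le[of U "\<lambda>w. w div d"] by auto
  ultimately obtain t where t: "\<forall>s\<in>S. dist_int (t * of_int s) \<ge> 1 / real k"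
    using lonely_runner_holds_card_le[of k S] assms(1,2) by auto
  have "dist_int ((t + of_int m) / of_int d * of_int w) \<ge> 1 / real k" if "w \<in> U" for w m
  proof -
    have "d \<noteq> 0" using w[OF that] that assms(5) by auto
    have "real_of_int w = of_int d * of_int (w div d)" using w[OF that] by (metis of_int_mult)
    then have "(t + of_int m) / of_int d * of_int w = t * of_int (w div d) + of_int (m * (w div d))"
      using \<open>d \<noteq> 0\<close> by (simp add: field_simps)
    moreover have "w div d \<in> S" unfolding S_def using that by blast
    ultimately show ?thesis using t by (metis dist_int_add_of_int)
  qed
  then show ?thesis by blast
qed

lemma Gcd_remove_dvd_if_not_LR:
  fixes V :: "int set"
  assumes "lonely_runner_holds (card V - 1)" "card V \<ge> 3" "0 \<notin> V" "\<not> LR V" "v \<in> V"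
  shows "Gcd (V - {v}) dvd v"
proof (rule ccontr)
  define k d where "k = card V" and "d = Gcd (V - {v})"
  assume "\<not> Gcd (V - {v}) dvd v"
  then have "\<not> d dvd v" unfolding d_def .
  have "finite V" using assms(2) card.infinite by fastforce
  have "card (V - {v}) = k - 1" unfolding k_def using \<open>finite V\<close> assms(5) by simp
  then have "V - {v} \<noteq> {}" using assms(2) unfolding k_def by (intro notI) simp
  then have "d \<noteq> 0" using assms(3) unfolding d_def by auto
  moreover have "d \<noteq> 1" "d \<ge> 0" using \<open>\<not> d dvd v\<close> unfolding d_def by auto
  ultimately have "d \<ge> 2" by linarith
  have "\<forall>w\<in>V - {v}. d dvd w" unfolding d_def by (simp add: Gcd_dvd)
  then obtain t where t: "\<forall>w\<in>V - {v}. \<forall>m::int. dist_int ((t + of_int m) / of_int d * of_int w) \<ge> 1 / real k"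
    using lonely_runner_holds_dvd[of k "V - {v}" d] assms(1,2,3) \<open>finite V\<close> \<open>card (V - {v}) = k - 1\<close>
    unfolding k_def by auto
  obtain m where m: "dist_int ((t + of_int m) * of_int v / of_int d) \<ge> 1/4"
    using ex_shift_dist_int_ge_quarter[OF \<open>d \<ge> 2\<close> \<open>\<not> d dvd v\<close>] by blast
  have "1 / (real k + 1) \<le> 1/4" "1 / (real k + 1) \<le> 1 / real k"
    using assms(2) unfolding k_def by (simp_all add: field_simps)
  have "dist_int ((t + of_int m) / of_int d * of_int w) \<ge> 1 / (real k + 1)" if "w \<in> V" for w
  proof (cases "w = v")
    case True
    then have "(t + of_int m) / of_int d * of_int w = (t + of_int m) * of_int v / of_int d" by simp
    then show ?thesis using m \<open>1 / (real k + 1) \<le> 1/4\<close> by (metis order.trans)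
  next
    case False
    then show ?thesis using t that \<open>1 / (real k + 1) \<le> 1 / real k\<close> by (meson DiffI order.trans singletonD)
  qed
  then have "LR V" unfolding LR_def k_def by blast
  with assms(4) show False ..
qed

definition abs_residue :: "int \<Rightarrow> int \<Rightarrow> int" where
  "abs_residue M v = min (v mod M) (M - v mod M)"

lemma abs_residue_dvd_iff:
  assumes "d dvd M"
  shows "d dvd abs_residue M v \<longleftrightarrow> d dvd v"
  using assms by (simp add: abs_residue_def min_def dvd_diff_right_iff dvd_mod_iff)

lemma abs_residue_mem_range:
  assumes "M > 0" "\<not> M dvd v"
  shows "abs_residue M v \<in> {1 .. M div 2}"
proof -
  have "0 \<le> v mod M" "v mod M < M" using assms(1) by simp_all
  then have "0 \<le> abs_residue M v" "2 * abs_residue M v \<le> M"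
    unfolding abs_residue_def by (simp_all add: min_def)
  moreover have "abs_residue M v \<noteq> 0"
    using abs_residue_dvd_iff[of M M v] assms(2) by (metis dvd_0_right dvd_refl)
  moreover have "(2 * abs_residue M v) div 2 \<le> M div 2"
    using \<open>2 * abs_residue M v \<le> M\<close> by (rule zdiv_mono1) simp
  ultimately show ?thesis by simp
qed

lemma dist_int_abs_residue:
  assumes "M > 0"
  shows "dist_int (of_int j * of_int (abs_residue M v) / of_int M) = dist_int (of_int j * of_int v / of_int M)"
proof -
  have shift: "dist_int (of_int j * of_int (s * v + M * q) / of_int M) = dist_int (of_int j * of_int v / of_int M)"
    if "s = 1 \<or> s = -1" for s q :: int
  proof -
    have "real_of_int j * of_int (s * v + M * q) / of_int M = of_int s * (of_int j * of_int v / of_int M) + of_int (j * q)"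
      using assms by (simp add: field_simps)
    then have "dist_int (of_int j * of_int (s * v + M * q) / of_int M) = dist_int (of_int s * (of_int j * of_int v / of_int M))"
      by (metis dist_int_add_of_int)
    then show ?thesis using that by auto
  qed
  have "v mod M = v - M * (v div M)" by (simp add: minus_mult_div_eq_mod)
  then have "abs_residue M v = 1 * v + M * (- (v div M)) \<or> abs_residue M v = (-1) * v + M * (1 + v div M)"
    unfolding abs_residue_def min_def by (simp add: ring_distribs)
  then show ?thesis using shift by metis
qed

lemma Gcd_abs_residue_remove_eq_1:
  fixes V :: "int set"
  assumes "Gcd V = 1" "v \<in> V" "Gcd (V - {v}) dvd v"
  shows "Gcd (abs_residue M ` (V - {v}) \<union> {M}) = 1"
proof -
  define G where "G = Gcd (abs_residue M ` (V - {v}) \<union> {M})"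
  have "G dvd M" unfolding G_def by (rule Gcd_dvd) simp
  then have "G dvd w" if "w \<in> V - {v}" for w
    using that abs_residue_dvd_iff[of G M w] unfolding G_def by (metis Gcd_dvd UnI1 image_eqI)
  then have "G dvd Gcd (V - {v})" by (rule Gcd_greatest)
  then have "G dvd v" using assms(3) by (rule dvd_trans)
  with \<open>\<And>w. w \<in> V - {v} \<Longrightarrow> G dvd w\<close> have "G dvd w" if "w \<in> V" for w
    using that by (cases "w = v") auto
  then have "G dvd Gcd V" by (rule Gcd_greatest)
  then show ?thesis using assms(1) unfolding G_def by simp
qed

lemma not_LR_imp_covers:
  assumes "\<not> LR V" "card V = k" "p > 0"
  shows "\<exists>v\<in>V. covers k p (abs_residue (int ((k + 1) * p)) v) j"
proof -
  define M where "M = int ((k + 1) * p)"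
  have "M > 0" unfolding M_def using assms(3) by (simp only: of_nat_0_less_iff) simp
  obtain v where "v \<in> V" and v: "dist_int (of_int j / of_int M * of_int v) < 1 / (real k + 1)"
    using assms(1,2) unfolding LR_def by (metis not_le)
  have "real (k + 1) * real p = of_int M" unfolding M_def by (simp add: algebra_simps)
  then have "covers k p (abs_residue M v) j \<longleftrightarrow> dist_int (of_int j * of_int v / of_int M) < 1 / (real k + 1)"
    unfolding covers_def using dist_int_abs_residue[OF \<open>M > 0\<close>] by simp
  then show ?thesis using \<open>v \<in> V\<close> v unfolding M_def by auto
qed

lemma covering_tuple_if_not_LR:
  fixes k p :: nat and V :: "int set"
  assumes "k \<ge> 3" "lonely_runner_holds (k - 1)" "p > 0" "card V = k" "\<not> LR V" "Gcd V = 1"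
    and not_dvd: "\<forall>v\<in>V. \<not> int p dvd v"
  shows "\<exists>u :: nat \<Rightarrow> int.
           (\<forall>i<k. u i \<in> {1 .. int (((k + 1) * p) div 2)} \<and> \<not> int p dvd u i) \<and>
           (\<forall>i<k. Gcd ({u j | j. j < k \<and> j \<noteq> i} \<union> {int ((k + 1) * p)}) = 1) \<and>
           (\<forall>j\<in>{1 .. int (((k + 1) * p) div 2)}. \<exists>i<k. covers k p (u i) j)"
proof -
  define M where "M = int ((k + 1) * p)"
  have "M > 0" unfolding M_def using assms(3) by (simp only: of_nat_0_less_iff) simp
  have "int p dvd M" unfolding M_def by simp
  have "finite V" using assms(1,4) card.infinite by fastforce
  then obtain h where h: "bij_betw h {..<k} V"
    using ex_bij_betw_nat_finite[of V] assms(4) by (auto simp: atLeast0LessThan)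
  define u where "u i = abs_residue M (h i)" for i
  have range: "\<forall>i<k. u i \<in> {1 .. int (((k + 1) * p) div 2)} \<and> \<not> int p dvd u i"
  proof (intro allI impI)
    fix i assume "i < k"
    then have "\<not> int p dvd h i" using not_dvd h by (auto dest: bij_betw_apply)
    moreover from this have "\<not> M dvd h i" using \<open>int p dvd M\<close> dvd_trans by blast
    ultimately show "u i \<in> {1 .. int (((k + 1) * p) div 2)} \<and> \<not> int p dvd u i"
      using abs_residue_mem_range[OF \<open>M > 0\<close>] abs_residue_dvd_iff[OF \<open>int p dvd M\<close>]
      unfolding u_def M_def by (simp add: zdiv_int)
  qed
  have coprime: "\<forall>i<k. Gcd ({u j | j. j < k \<and> j \<noteq> i} \<union> {M}) = 1"
  proof (intro allI impI)
    fix i assume "i < k"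
    have "0 \<notin> V" using not_dvd by auto
    have "{u j | j. j < k \<and> j \<noteq> i} = abs_residue M ` h ` ({..<k} - {i})" unfolding u_def by auto
    also have "h ` ({..<k} - {i}) = V - {h i}"
      using h \<open>i < k\<close> unfolding bij_betw_def by (subst inj_on_image_set_diff[of h "{..<k}"]) auto
    finally show "Gcd ({u j | j. j < k \<and> j \<noteq> i} \<union> {M}) = 1"
      using Gcd_remove_dvd_if_not_LR[of V "h i"] Gcd_abs_residue_remove_eq_1[of V "h i" M]
        assms \<open>0 \<notin> V\<close> \<open>i < k\<close> h by (auto dest: bij_betw_apply)
  qed
  have cover: "\<forall>j\<in>{1 .. int (((k + 1) * p) div 2)}. \<exists>i<k. covers k p (u i) j"
  proof
    fix j :: int
    obtain v where "v \<in> V" "covers k p (abs_residue M v) j"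
      using not_LR_imp_covers[OF assms(5,4,3)] unfolding M_def by blast
    then show "\<exists>i<k. covers k p (u i) j"
      using h unfolding u_def bij_betw_def by auto
  qed
  show ?thesis using range coprime cover unfolding M_def by blast
qed

lemma LR_mult_image:
  fixes g :: int
  assumes "g \<noteq> 0" "LR V"
  shows "LR ((*) g ` V)"
proof -
  obtain t where t: "\<forall>v\<in>V. dist_int (t * of_int v) \<ge> 1 / (real (card V) + 1)"
    using assms(2) unfolding LR_def by blast
  have "card ((*) g ` V) = card V" using assms(1) by (simp add: card_image inj_on_mult)
  moreover have "t / of_int g * of_int (g * v) = t * of_int v" for v
    using assms(1) by simp
  ultimately show ?thesis unfolding LR_def using t by (intro exI[of _ "t / of_int g"]) auto
qed

lemma not_LR_primitive:
  fixes V :: "int set"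
  assumes "finite V" "0 \<notin> V" "V \<noteq> {}" "\<not> LR V"
  obtains W where "finite W" "card W = card V" "\<not> LR W" "Gcd W = 1" "\<Prod>W dvd \<Prod>V"
proof -
  define g where "g = Gcd V"
  have "\<not> V \<subseteq> {0}" using assms(2,3) by blast
  then have "g > 0" unfolding g_def using Gcd_int_greater_eq_0[of V] Gcd_0_iff[of V] by linarith
  define W where "W = (\<lambda>v. v div g) ` V"
  have "(\<lambda>v. g * (v div g)) ` V = V" unfolding g_def by (auto intro: image_eqI)
  then have V: "(*) g ` W = V" unfolding W_def image_image .
  have inj: "inj_on ((*) g) W" using \<open>g > 0\<close> by (simp add: inj_on_def)
  have "finite W" unfolding W_def using assms(1) by simp
  moreover have "card W = card V" using card_image[OF inj] V by simp
  moreover have "\<not> LR W" using LR_mult_image[of g W] \<open>g > 0\<close> V assms(4) by auto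
  moreover have "g = normalize (g * Gcd W)" using Gcd_mult[of g W] V unfolding g_def by simp
  then have "Gcd W = 1" using \<open>g > 0\<close> by (simp add: abs_mult)
  moreover have "\<Prod>V = (\<Prod>w\<in>W. g * w)" using prod.reindex[OF inj, of id] V by simp
  then have "\<Prod>V = g ^ card W * \<Prod>W" by (simp add: prod.distrib)
  then have "\<Prod>W dvd \<Prod>V" by simp
  ultimately show ?thesis using that by blast
qed

theorem lemma6:
  fixes k p :: nat
  assumes hk: "k \<ge> 3"
    and hLR: "\<forall>S :: int set. finite S \<and> card S = k - 1 \<and> (\<forall>v\<in>S. v > 0) \<longrightarrow> LR S"
    and hp: "p > 0"
    and hno: "\<not> (\<exists>v :: nat \<Rightarrow> int.
                 (\<forall>i<k. v i \<in> {1 .. int (((k + 1) * p) div 2)} \<and> \<not> int p dvd v i) \<and>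
                 (\<forall>i<k. Gcd ({v j | j. j < k \<and> j \<noteq> i} \<union> {int ((k + 1) * p)}) = 1) \<and>
                 (\<forall>j\<in>{1 .. int (((k + 1) * p) div 2)}. \<exists>i<k. covers k p (v i) j))"
  shows "\<forall>V :: int set. finite V \<and> card V = k \<and> \<not> LR V \<longrightarrow> int p dvd (\<Prod>V)"
proof (intro allI impI)
  fix V :: "int set"
  assume V: "finite V \<and> card V = k \<and> \<not> LR V"
  show "int p dvd \<Prod>V"
  proof (rule ccontr)
    assume not_dvd: "\<not> int p dvd \<Prod>V"
    then have "0 \<notin> V" using V by (metis dvd_0_right prod_zero_iff)
    moreover have "V \<noteq> {}" using V hk by auto
    ultimately obtain W where W: "finite W" "card W = k" "\<not> LR W" "Gcd W = 1" "\<Prod>W dvd \<Prod>V"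
      using not_LR_primitive[of V] V by auto
    have "\<forall>w\<in>W. \<not> int p dvd w"
      using W(1,5) not_dvd by (meson dvd_prodI dvd_trans)
    moreover have "lonely_runner_holds (k - 1)" using hLR unfolding lonely_runner_holds_def .
    ultimately show False
      using covering_tuple_if_not_LR[OF hk _ hp W(2-4)] hno by blast
  qed
qed

end
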